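(* Let $m$ be an even positive integer. The collection of right cosets $\{\Gamma_0(2)^+\gamma:\gamma\in M_1^m\}$ is closed under right multiplication by elements of $\Gamma_0(2)$: for every $\gamma\in M_1^m$ and $\delta\in\Gamma_0(2)$ there is $\gamma'\in M_1^m$ with $\Gamma_0(2)^+\gamma\delta=\Gamma_0(2)^+\gamma'$.
   Context: Matrices are in $GL_2^+(\mathbb{R})$ considered up to sign; $\Gamma_0(2)=\{\begin{bmatrix}a&b\\c&d\end{bmatrix}\in SL_2(\mathbb{Z}): c\equiv0\pmod 2\}$, $w_2=2^{-1/2}\begin{bmatrix}0&-1\\2&0\end{bmatrix}$, $\Gamma_0(2)^+$ is the group generated by $\Gamma_0(2)$ and $w_2$. $M_1^m=\{\begin{bmatrix}x&y\\0&z\end{bmatrix}: x,y,z\in\mathbb{Z},\ x,z>0,\ xz=m,\ 0\leq y<z,\ \gcd(x,y,z)=1,\ x\text{ odd}\}$. *)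

theory Defs
  imports "HOL-Analysis.Analysis"
begin

definition mat2 :: "real \<Rightarrow> real \<Rightarrow> real \<Rightarrow> real \<Rightarrow> real^2^2" where
  "mat2 a b c d = vector [vector [a, b], vector [c, d]]"

definition Gamma0_2 :: "(real^2^2) set" where
  "Gamma0_2 = {mat2 (of_int a) (of_int b) (of_int c) (of_int d) | a b c d :: int.
                 a * d - b * c = 1 \<and> even c}"

definition w2 :: "real^2^2" where
  "w2 = (1 / sqrt 2) *\<^sub>R mat2 0 (-1) 2 0"

inductive_set Gamma0_2_plus :: "(real^2^2) set" where
  base: "g \<in> Gamma0_2 \<Longrightarrow> g \<in> Gamma0_2_plus"
| fricke: "w2 \<in> Gamma0_2_plus"
| mult: "g \<in> Gamma0_2_plus \<Longrightarrow> h \<in> Gamma0_2_plus \<Longrightarrow> g ** h \<in> Gamma0_2_plus"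
| inv: "g \<in> Gamma0_2_plus \<Longrightarrow> matrix_inv g \<in> Gamma0_2_plus"

definition M1 :: "int \<Rightarrow> (real^2^2) set" where
  "M1 m = {mat2 (of_int x) (of_int y) 0 (of_int z) | x y z :: int.
             x > 0 \<and> z > 0 \<and> x * z = m \<and> 0 \<le> y \<and> y < z \<and> gcd (gcd x y) z = 1 \<and> odd x}"

definition rcoset_plus :: "real^2^2 \<Rightarrow> (real^2^2) set" where
  "rcoset_plus g = (\<lambda>h. h ** g) ` Gamma0_2_plus"

end

theory Submission
  imports Defs
begin

text \<open>
  Write \<open>\<gamma> \<delta> = [[p, q], [r, s]]\<close>. It is an integer matrix of determinant \<open>m\<close> with \<open>p\<close> odd, \<open>r\<close> even,
  and (as \<open>\<delta>\<close> is unimodular) coprime entries. The Hermite normal form writes it as \<open>S G\<close> with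
  \<open>S \<in> SL\<^sub>2(\<int>)\<close> and \<open>G\<close> upper triangular with first entry \<open>gcd(p, r)\<close>. This entry is odd, so
  \<open>r / gcd(p, r)\<close> is even, i.e. \<open>S \<in> \<Gamma>\<^sub>0(2)\<close>, and \<open>G \<in> M\<^sub>1\<^sup>m\<close>. Finally \<open>S\<close> is absorbed into \<open>\<Gamma>\<^sub>0(2)\<^sup>+\<close>.
\<close>

lemma mat2_mult:
  "mat2 a b c d ** mat2 e f g h = mat2 (a*e+b*g) (a*f+b*h) (c*e+d*g) (c*f+d*h)"
  unfolding mat2_def matrix_matrix_mult_def
  by (simp add: vec_eq_iff forall_2 sum_2)

lemma mat2_of_int_mult:
  "mat2 (of_int a) (of_int b) (of_int c) (of_int d) ** mat2 (of_int e) (of_int f) (of_int g) (of_int h)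
   = mat2 (of_int (a*e+b*g)) (of_int (a*f+b*h)) (of_int (c*e+d*g)) (of_int (c*f+d*h))"
  by (simp add: mat2_mult)

lemma mat2_one: "mat 1 = mat2 1 0 0 1"
  unfolding mat2_def by (simp add: vec_eq_iff forall_2 mat_def)

lemma matrix_inv_left:
  assumes "invertible A"
  shows "matrix_inv A ** A = mat 1"
  using someI_ex[OF assms[unfolded invertible_def]] unfolding matrix_inv_def by blast

lemma Gamma0_2_invertible:
  assumes "g \<in> Gamma0_2"
  shows "invertible g"
proof -
  obtain a b c d :: int where g: "g = mat2 (of_int a) (of_int b) (of_int c) (of_int d)"
    and det: "a * d - b * c = 1"
    using assms unfolding Gamma0_2_def by auto
  have "g ** mat2 (of_int d) (of_int (-b)) (of_int (-c)) (of_int a) = mat 1"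
    unfolding g mat2_of_int_mult mat2_one using det by (simp add: algebra_simps)
  then show ?thesis
    using invertible_right_inverse by blast
qed

lemma Gamma0_2_plus_right_closed:
  assumes "s \<in> Gamma0_2_plus" "invertible s"
  shows "(\<lambda>h. h ** s) ` Gamma0_2_plus = Gamma0_2_plus"
proof
  show "(\<lambda>h. h ** s) ` Gamma0_2_plus \<subseteq> Gamma0_2_plus"
    using assms(1) Gamma0_2_plus.mult by blast
  show "Gamma0_2_plus \<subseteq> (\<lambda>h. h ** s) ` Gamma0_2_plus"
  proof
    fix h assume h: "h \<in> Gamma0_2_plus"
    have "h ** matrix_inv s \<in> Gamma0_2_plus"
      using h assms(1) Gamma0_2_plus.mult Gamma0_2_plus.inv by blast
    moreover have "h = (h ** matrix_inv s) ** s"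
      by (metis matrix_inv_left[OF assms(2)] matrix_mul_assoc matrix_mul_rid)
    ultimately show "h \<in> (\<lambda>h. h ** s) ` Gamma0_2_plus" by blast
  qed
qed

lemma rcoset_plus_mult_left:
  assumes "s \<in> Gamma0_2_plus" "invertible s"
  shows "rcoset_plus (s ** g) = rcoset_plus g"
proof -
  have "rcoset_plus (s ** g) = (\<lambda>h. h ** g) ` ((\<lambda>h. h ** s) ` Gamma0_2_plus)"
    unfolding rcoset_plus_def image_image by (simp add: matrix_mul_assoc)
  then show ?thesis
    unfolding rcoset_plus_def Gamma0_2_plus_right_closed[OF assms] .
qed

lemma gcd_entries_mult_unimodular:
  fixes e f g h a b c d :: int
  assumes det: "a * d - b * c = 1" and coprime: "gcd (gcd e f) (gcd g h) = 1"
  shows "gcd (gcd (e*a + f*c) (e*b + f*d)) (gcd (g*a + h*c) (g*b + h*d)) = 1"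
proof -
  define D where "D = gcd (gcd (e*a + f*c) (e*b + f*d)) (gcd (g*a + h*c) (g*b + h*d))"
  have D: "D dvd e*a + f*c" "D dvd e*b + f*d" "D dvd g*a + h*c" "D dvd g*b + h*d"
    unfolding D_def by (meson dvd_trans gcd_dvd1 gcd_dvd2)+
  \<comment> \<open>the old entries are recovered by multiplying with the inverse \<open>[[d, -b], [-c, a]]\<close>\<close>
  have "(e*a + f*c) * d - (e*b + f*d) * c = e * (a*d - b*c)"
       "(e*b + f*d) * a - (e*a + f*c) * b = f * (a*d - b*c)"
       "(g*a + h*c) * d - (g*b + h*d) * c = g * (a*d - b*c)"
       "(g*b + h*d) * a - (g*a + h*c) * b = h * (a*d - b*c)"
    by (simp_all add: algebra_simps)
  then have "D dvd e" "D dvd f" "D dvd g" "D dvd h"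
    using D det by (metis dvd_diff dvd_mult2 mult.right_neutral)+
  then have "D dvd 1"
    using coprime by (metis gcd_greatest)
  then show ?thesis
    unfolding D_def by simp
qed

lemma unimodular_completion:
  fixes \<alpha> \<gamma> q s :: int
  defines "z \<equiv> \<alpha> * s - \<gamma> * q"
  assumes coprime: "coprime \<alpha> \<gamma>" and "z > 0"
  shows "\<exists>\<beta> \<delta> y. \<alpha> * \<delta> - \<beta> * \<gamma> = 1 \<and> 0 \<le> y \<and> y < z \<and> q = \<alpha> * y + \<beta> * z \<and> s = \<gamma> * y + \<delta> * z"
proof -
  obtain u v where uv: "u * \<alpha> + v * \<gamma> = 1"
    using bezout_int[of \<alpha> \<gamma>] coprime by auto
  define y0 where "y0 = u * q + v * s"
  define y where "y = y0 mod z"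
  define k where "k = y0 div z"
  have y: "y = y0 - k * z"
    unfolding y_def k_def by (simp add: minus_div_mult_eq_mod)
  define \<beta> where "\<beta> = \<alpha> * k - v"
  define \<delta> where "\<delta> = \<gamma> * k + u"
  have "\<alpha> * \<delta> - \<beta> * \<gamma> = u * \<alpha> + v * \<gamma>"
    unfolding \<beta>_def \<delta>_def by (simp add: algebra_simps)
  moreover have "\<alpha> * y + \<beta> * z = q * (u * \<alpha> + v * \<gamma>)"
    unfolding \<beta>_def y y0_def z_def by (simp add: algebra_simps)
  moreover have "\<gamma> * y + \<delta> * z = s * (u * \<alpha> + v * \<gamma>)"
    unfolding \<delta>_def y y0_def z_def by (simp add: algebra_simps)
  moreover have "0 \<le> y" "y < z"
    unfolding y_def using \<open>z > 0\<close> by simp_all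
  ultimately show ?thesis
    using uv by (intro exI[of _ \<beta>] exI[of _ \<delta>] exI[of _ y]) simp
qed

lemma hermite_decomposition_int:
  fixes p q r s :: int
  assumes det: "p * s - q * r > 0" and "p \<noteq> 0"
  shows "\<exists>\<alpha> \<beta> \<gamma> \<delta> y z. \<alpha> * \<delta> - \<beta> * \<gamma> = 1 \<and> gcd p r * z = p * s - q * r \<and> 0 \<le> y \<and> y < z \<and>
           p = \<alpha> * gcd p r \<and> q = \<alpha> * y + \<beta> * z \<and> r = \<gamma> * gcd p r \<and> s = \<gamma> * y + \<delta> * z"
proof -
  define x where "x = gcd p r"
  define \<alpha> where "\<alpha> = p div x"
  define \<gamma> where "\<gamma> = r div x"
  have "x > 0"
    unfolding x_def using \<open>p \<noteq> 0\<close> by simp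
  have p: "p = \<alpha> * x" and r: "r = \<gamma> * x"
    unfolding \<alpha>_def \<gamma>_def x_def by simp_all
  have "coprime \<alpha> \<gamma>"
    unfolding \<alpha>_def \<gamma>_def x_def using \<open>p \<noteq> 0\<close> by (simp add: div_gcd_coprime)
  have xz: "x * (\<alpha> * s - \<gamma> * q) = p * s - q * r"
    using p r by (simp add: algebra_simps)
  then have "\<alpha> * s - \<gamma> * q > 0"
    using det \<open>x > 0\<close> by (metis zero_less_mult_pos)
  then obtain \<beta> \<delta> y where "\<alpha> * \<delta> - \<beta> * \<gamma> = 1" "0 \<le> y" "y < \<alpha> * s - \<gamma> * q"
      "q = \<alpha> * y + \<beta> * (\<alpha> * s - \<gamma> * q)" "s = \<gamma> * y + \<delta> * (\<alpha> * s - \<gamma> * q)"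
    using unimodular_completion \<open>coprime \<alpha> \<gamma>\<close> by blast
  then show ?thesis
    using xz p r unfolding x_def by blast
qed

lemma Gamma0_2_M1_decomposition:
  fixes p q r s m :: int
  assumes det: "p * s - q * r = m" and "m > 0" and "odd p" and "even r"
    and coprime: "gcd (gcd p q) (gcd r s) = 1"
  shows "\<exists>S \<in> Gamma0_2. \<exists>G \<in> M1 m. mat2 (of_int p) (of_int q) (of_int r) (of_int s) = S ** G"
proof -
  define x where "x = gcd p r"
  obtain \<alpha> \<beta> \<gamma> \<delta> y z where unimod: "\<alpha> * \<delta> - \<beta> * \<gamma> = 1" and xz: "x * z = m"
      and y: "0 \<le> y" "y < z"
      and entries: "p = \<alpha> * x" "q = \<alpha> * y + \<beta> * z" "r = \<gamma> * x" "s = \<gamma> * y + \<delta> * z"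
    using hermite_decomposition_int[of p s q r] assms(2,3) unfolding det x_def by fastforce
  have "x > 0"
    unfolding x_def using \<open>odd p\<close> by auto
  have "odd x"
    using \<open>odd p\<close> entries(1) by simp
  then have "even \<gamma>"
    using \<open>even r\<close> entries(3) by simp
  have "gcd (gcd x y) z dvd p" "gcd (gcd x y) z dvd q" "gcd (gcd x y) z dvd r" "gcd (gcd x y) z dvd s"
    unfolding entries by (meson dvd_add dvd_mult dvd_trans gcd_dvd1 gcd_dvd2)+
  then have "gcd (gcd x y) z dvd 1"
    using coprime by (metis gcd_greatest)
  then have "gcd (gcd x y) z = 1"
    by simp
  have "mat2 (of_int \<alpha>) (of_int \<beta>) (of_int \<gamma>) (of_int \<delta>) \<in> Gamma0_2"
    unfolding Gamma0_2_def using unimod \<open>even \<gamma>\<close> by blast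
  moreover have "mat2 (of_int x) (of_int y) 0 (of_int z) \<in> M1 m"
    unfolding M1_def mem_Collect_eq using \<open>x > 0\<close> xz y \<open>odd x\<close> \<open>gcd (gcd x y) z = 1\<close>
    by (intro exI[of _ x] exI[of _ y] exI[of _ z]) simp
  moreover have "mat2 (of_int p) (of_int q) (of_int r) (of_int s)
      = mat2 (of_int \<alpha>) (of_int \<beta>) (of_int \<gamma>) (of_int \<delta>) ** mat2 (of_int x) (of_int y) (of_int 0) (of_int z)"
    unfolding mat2_of_int_mult entries by simp
  ultimately show ?thesis
    by fastforce
qed

theorem lemma2p4:
  fixes m :: int
  assumes "m > 0" and "even m"
    and "\<gamma> \<in> M1 m" and "\<delta> \<in> Gamma0_2"
  shows "\<exists>\<gamma>' \<in> M1 m. rcoset_plus (\<gamma> ** \<delta>) = rcoset_plus \<gamma>'"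
proof -
  obtain x y z where \<gamma>: "\<gamma> = mat2 (of_int x) (of_int y) 0 (of_int z)"
    and "x * z = m" "gcd (gcd x y) z = 1" "odd x"
    using assms(3) unfolding M1_def by auto
  obtain a b c d where \<delta>: "\<delta> = mat2 (of_int a) (of_int b) (of_int c) (of_int d)"
    and det: "a * d - b * c = 1" and "even c"
    using assms(4) unfolding Gamma0_2_def by auto
  have "odd a"
  proof
    assume "even a"
    then have "even (a * d - b * c)"
      using \<open>even c\<close> by simp
    then show False
      using det by simp
  qed
  have "(x*a + y*c) * (z*d) - (x*b + y*d) * (z*c) = x * z * (a*d - b*c)"
    by (simp add: algebra_simps)
  moreover have "gcd (gcd (x*a + y*c) (x*b + y*d)) (gcd (z*c) (z*d)) = 1"
    using gcd_entries_mult_unimodular[OF det, of x y 0 z] \<open>gcd (gcd x y) z = 1\<close> by simp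
  ultimately obtain S G where "S \<in> Gamma0_2" "G \<in> M1 m"
    and SG: "mat2 (of_int (x*a + y*c)) (of_int (x*b + y*d)) (of_int (z*c)) (of_int (z*d)) = S ** G"
    using Gamma0_2_M1_decomposition \<open>m > 0\<close> \<open>odd a\<close> \<open>odd x\<close> \<open>even c\<close> det \<open>x * z = m\<close>
    by (metis even_add even_mult_iff mult.right_neutral)
  have "\<gamma> ** \<delta> = S ** G"
    unfolding \<gamma> \<delta> SG[symmetric] using mat2_of_int_mult[of x y 0 z] by simp
  then have "rcoset_plus (\<gamma> ** \<delta>) = rcoset_plus G"
    using rcoset_plus_mult_left Gamma0_2_plus.base Gamma0_2_invertible \<open>S \<in> Gamma0_2\<close> by metis
  then show ?thesis
    using \<open>G \<in> M1 m\<close> by blast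
qed

end
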